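(* Let $n>d$ be positive integers, $\alpha\in(0,1)$, $\hat\theta\in\mathbb{R}$, $\hat\sigma\in(0,\infty)$ fixed, and $\hat\theta_L=\hat\theta-t_{n-d,1-\alpha/2}\hat\sigma/\sqrt n$, $\hat\theta_U=\hat\theta+t_{n-d,1-\alpha/2}\hat\sigma/\sqrt n$. Then, as $m\to\infty$, $$1-\Phi\big(\sqrt{m/n}\,\delta_U(c)\big)\to\begin{cases}1 & c<\hat\theta_L,\\ 1/2 & c=\hat\theta_L,\\ 0 & c>\hat\theta_L,\end{cases}\qquad 1-\Phi\big(\sqrt{m/n}\,\delta_L(c)\big)\to\begin{cases}1 & c<\hat\theta_U,\\ 1/2 & c=\hat\theta_U,\\ 0 & c>\hat\theta_U.\end{cases}$$
   Context: $\Phi$ is the standard normal CDF. For $\nu>0$, $\delta\in\mathbb{R}$, $F_{\nu,\delta}$ is the CDF of the noncentral $t$-distribution with $\nu$ degrees of freedom and noncentrality $\delta$, and $t_{\nu,p}=F_{\nu,0}^{-1}(p)$. For a cutoff $c\in\mathbb{R}$ let $q(c)=\sqrt n\,(c-\hat\theta)/\hat\sigma$, and let $\delta_L(c),\delta_U(c)$ be the unique reals with $F_{n-d,\delta_L(c)}(q(c))=1-\alpha/2$ and $F_{n-d,\delta_U(c)}(q(c))=\alpha/2$. *)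

theory Defs
  imports "HOL-Probability.Probability"
begin

definition Phi :: "real \<Rightarrow> real" where
  "Phi x = cdf (density lborel std_normal_density) x"

definition chisq_density :: "real \<Rightarrow> real \<Rightarrow> real" where
  "chisq_density \<nu> v = (if v > 0 then v powr (\<nu>/2 - 1) * exp (- v/2) / (2 powr (\<nu>/2) * Gamma (\<nu>/2)) else 0)"

text \<open>CDF of the noncentral t distribution: law of (Z + delta) / sqrt(V/nu), Z standard normal,
  V chi-square(nu) independent; by conditioning on V,
  F(x) = P(Z \<le> x sqrt(V/nu) - delta) = E[Phi(x sqrt(V/nu) - delta)].\<close>
definition nct_cdf :: "real \<Rightarrow> real \<Rightarrow> real \<Rightarrow> real" where
  "nct_cdf \<nu> \<delta> x = (LINT v|lborel. chisq_density \<nu> v * Phi (x * sqrt (v / \<nu>) - \<delta>))"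

definition t_quantile :: "real \<Rightarrow> real \<Rightarrow> real" where
  "t_quantile \<nu> p = (THE x. nct_cdf \<nu> 0 x = p)"

definition qstat :: "nat \<Rightarrow> real \<Rightarrow> real \<Rightarrow> real \<Rightarrow> real" where
  "qstat n \<theta> \<sigma> c = sqrt (real n) * (c - \<theta>) / \<sigma>"

definition delta_L :: "nat \<Rightarrow> nat \<Rightarrow> real \<Rightarrow> real \<Rightarrow> real \<Rightarrow> real \<Rightarrow> real" where
  "delta_L n d \<alpha> \<theta> \<sigma> c = (THE \<delta>. nct_cdf (real n - real d) \<delta> (qstat n \<theta> \<sigma> c) = 1 - \<alpha>/2)"

definition delta_U :: "nat \<Rightarrow> nat \<Rightarrow> real \<Rightarrow> real \<Rightarrow> real \<Rightarrow> real \<Rightarrow> real" where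
  "delta_U n d \<alpha> \<theta> \<sigma> c = (THE \<delta>. nct_cdf (real n - real d) \<delta> (qstat n \<theta> \<sigma> c) = \<alpha>/2)"

end

theory Submission
  imports Defs "HOL-Real_Asymp.Real_Asymp"
begin

text \<open>
  Write F(\<delta>, x) = E[Phi (x sqrt (V/\<nu>) - \<delta>)] with V chi-square distributed. By dominated
  convergence F is continuous, strictly decreasing from 1 to 0 in \<delta> and strictly increasing
  from 0 to 1 in x, so \<delta>_L(c), \<delta>_U(c) and the quantile t are well defined. By the symmetry
  F(0, -x) = 1 - F(0, x) we get F(\<delta>_U(c), q(c)) = F(0, -t) and F(\<delta>_L(c), q(c)) = F(0, t), and
  monotonicity in both arguments forces \<delta>_U(c) to have the sign of q(c) + t, i.e. of c - \<theta>_L,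
  and \<delta>_L(c) that of c - \<theta>_U. Finally sqrt (m/n) \<delta> tends to +\<infinity>, 0 or -\<infinity> according to the
  sign of \<delta>, and Phi 0 = 1/2.
\<close>

abbreviation std_normal :: "real measure" where
  "std_normal \<equiv> density lborel std_normal_density"

interpretation std_normal: real_distribution std_normal
  by (simp add: real_distribution_def real_distribution_axioms_def prob_space_normal_density)

lemma Phi_eq_cdf: "Phi = cdf std_normal"
  by (simp add: fun_eq_iff Phi_def)

lemma Phi_nonneg: "0 \<le> Phi x"
  unfolding Phi_eq_cdf by (rule std_normal.cdf_nonneg)

lemma Phi_le_1: "Phi x \<le> 1"
  unfolding Phi_eq_cdf by (rule std_normal.cdf_bounded_prob)

lemma abs_Phi_le_1: "\<bar>Phi x\<bar> \<le> 1"
  using Phi_nonneg Phi_le_1 by simp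

lemma Phi_at_top: "(Phi \<longlongrightarrow> 1) at_top"
  unfolding Phi_eq_cdf by (rule std_normal.cdf_lim_at_top_prob)

lemma Phi_at_bot: "(Phi \<longlongrightarrow> 0) at_bot"
  unfolding Phi_eq_cdf by (rule std_normal.cdf_lim_at_bot)

lemma null_sets_std_normal_iff: "A \<in> null_sets std_normal \<longleftrightarrow> A \<in> null_sets lborel"
proof -
  have "std_normal_density x \<noteq> 0" for x
    using normal_density_pos[of 1 0 x] by simp
  then have "A \<in> null_sets std_normal \<longleftrightarrow> A \<in> sets lborel \<and> (AE x in lborel. x \<notin> A)"
    by (simp add: null_sets_density_iff)
  then show ?thesis
    using AE_iff_null_sets[of A lborel] by blast
qed

lemma isCont_Phi: "isCont Phi x"
proof -
  have "{x} \<in> null_sets std_normal"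
    by (simp add: null_sets_std_normal_iff countable_imp_null_set_lborel)
  then show ?thesis
    unfolding Phi_eq_cdf std_normal.isCont_cdf by (auto simp: measure_def)
qed

lemma borel_measurable_Phi [measurable]: "Phi \<in> borel_measurable borel"
  by (intro borel_measurable_continuous_onI continuous_at_imp_continuous_on ballI isCont_Phi)

lemma Phi_strict_mono: "strict_mono Phi"
proof (rule strict_monoI)
  fix x y :: real assume "x < y"
  then have "{x<..y} \<notin> null_sets lborel"
    by (auto simp: null_sets_def)
  then have "measure std_normal {x<..y} \<noteq> 0"
    by (auto simp: null_sets_std_normal_iff[symmetric] std_normal.emeasure_eq_measure)
  moreover have "Phi y - Phi x = measure std_normal {x<..y}"
    unfolding Phi_eq_cdf using std_normal.cdf_diff_eq[OF \<open>x < y\<close>] by simp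
  ultimately show "Phi x < Phi y"
    by (metis measure_nonneg diff_gt_0_iff_gt order_le_less)
qed
lemma Phi_minus: "Phi (- x) = 1 - Phi x"
proof -
  have "emeasure std_normal {..-x} = (\<integral>\<^sup>+v. std_normal_density v * indicator {..-x} v \<partial>lborel)"
    by (simp add: emeasure_density nn_integral_set_ennreal)
  also have "\<dots> = (\<integral>\<^sup>+v. std_normal_density (0 + -1 * v) * indicator {..-x} (0 + -1 * v) \<partial>lborel)"
    by (subst nn_integral_real_affine[where c = "-1" and t = 0]) auto
  also have "\<dots> = (\<integral>\<^sup>+v. std_normal_density v * indicator {x<..} v \<partial>lborel)"
    using AE_lborel_singleton[of x]
    by (intro nn_integral_cong_AE) (auto simp: std_normal_density_def indicator_def)
  also have "\<dots> = emeasure std_normal {x<..}"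
    by (simp add: emeasure_density nn_integral_set_ennreal)
  finally have "measure std_normal {..-x} = measure std_normal (space std_normal - {..x})"
    by (simp add: measure_def Compl_eq_Diff_UNIV[symmetric] Compl_atMost)
  then show ?thesis
    unfolding Phi_eq_cdf cdf_def using std_normal.prob_compl[of "{..x}"] by simp
qed

lemma Phi_0: "Phi 0 = 1/2"
  using Phi_minus[of 0] by simp

definition chisq :: "real \<Rightarrow> real measure" where
  "chisq \<nu> = density lborel (chisq_density \<nu>)"

lemma sets_chisq [measurable_cong]: "sets (chisq \<nu>) = sets borel"
  by (simp add: chisq_def)

lemma borel_measurable_chisq_density [measurable]: "chisq_density \<nu> \<in> borel_measurable borel"
  unfolding chisq_density_def by measurable

lemma chisq_density_nonneg: "0 < \<nu> \<Longrightarrow> 0 \<le> chisq_density \<nu> v"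
  unfolding chisq_density_def using Gamma_real_pos[of "\<nu>/2"] by auto

lemma chisq_density_scale_2:
  assumes "0 < \<nu>"
  shows "2 * chisq_density \<nu> (2 * x) = (if 0 \<le> x then x powr (\<nu>/2 - 1) / exp x else 0) / Gamma (\<nu>/2)"
proof (cases "0 < x")
  case True
  have "(2::real) powr (\<nu>/2) = 2 * 2 powr (\<nu>/2 - 1)"
    by (simp add: powr_diff)
  moreover have "(2 * x) powr (\<nu>/2 - 1) = 2 powr (\<nu>/2 - 1) * x powr (\<nu>/2 - 1)"
    using True by (simp add: powr_mult)
  ultimately show ?thesis
    using True Gamma_real_pos[of "\<nu>/2"] assms by (simp add: chisq_density_def exp_minus field_simps)
qed (auto simp: chisq_density_def)

text \<open>The substitution \<open>v = 2x\<close> turns the chi-square density into Euler's Gamma integrand.\<close>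
lemma nn_integral_chisq_density:
  assumes "0 < \<nu>"
  shows "(\<integral>\<^sup>+v. chisq_density \<nu> v \<partial>lborel) = 1"
proof -
  define f where "f = (\<lambda>x::real. (if 0 \<le> x then x powr (\<nu>/2 - 1) / exp x else 0) / Gamma (\<nu>/2))"
  have Gamma_pos: "0 < Gamma (\<nu>/2)"
    using assms by (simp add: Gamma_real_pos)
  have "((\<lambda>x. x powr (\<nu>/2 - 1) / exp x) has_integral Gamma (\<nu>/2)) {0..}"
    using assms by (intro Gamma_integral_real) simp
  then have "((\<lambda>x::real. if x \<in> {0..} then x powr (\<nu>/2 - 1) / exp x else 0) has_integral Gamma (\<nu>/2)) UNIV"
    by (rule has_integral_restrict_UNIV[THEN iffD2])
  from has_integral_divide[OF this, of "Gamma (\<nu>/2)"]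
  have f_integral: "(f has_integral 1) UNIV"
    using Gamma_pos by (simp add: f_def)
  have "(\<integral>\<^sup>+v. chisq_density \<nu> v \<partial>lborel) = 2 * (\<integral>\<^sup>+x. chisq_density \<nu> (0 + 2 * x) \<partial>lborel)"
    by (subst nn_integral_real_affine[where c = 2 and t = 0]) auto
  also have "\<dots> = (\<integral>\<^sup>+x. f x \<partial>lborel)"
    using chisq_density_nonneg[OF assms]
    by (subst nn_integral_cmult[symmetric]) (auto simp: ennreal_mult f_def chisq_density_scale_2[OF assms, symmetric])
  also have "\<dots> = 1"
    using f_integral Gamma_pos by (subst nn_integral_has_integral_lborel[where I = 1]) (auto simp: f_def)
  finally show ?thesis .
qed

lemma prob_space_chisq: "0 < \<nu> \<Longrightarrow> prob_space (chisq \<nu>)"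
  by (rule prob_spaceI) (simp add: chisq_def emeasure_density nn_integral_chisq_density)

lemma AE_chisq_pos: "AE v in chisq \<nu>. 0 < v"
  unfolding chisq_def by (subst AE_density) (auto simp: chisq_density_def)

lemma nct_cdf_eq_chisq_integral:
  "0 < \<nu> \<Longrightarrow> nct_cdf \<nu> \<delta> x = (\<integral>v. Phi (x * sqrt (v / \<nu>) - \<delta>) \<partial>chisq \<nu>)"
  unfolding nct_cdf_def chisq_def by (subst integral_density) (auto simp: chisq_density_nonneg)

lemma strict_mono_ex1_eq:
  fixes f :: "real \<Rightarrow> real"
  assumes mono: "strict_mono f" and cont: "\<And>x. isCont f x"
    and lim_neg: "(\<lambda>i. f (- real i)) \<longlonglongrightarrow> a" and lim_pos: "(\<lambda>i. f (real i)) \<longlonglongrightarrow> b"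
    and "a < y" "y < b"
  shows "\<exists>!x. f x = y"
proof -
  have "eventually (\<lambda>i. f (- real i) < y \<and> y < f (real i)) sequentially"
    using order_tendstoD(2)[OF lim_neg \<open>a < y\<close>] order_tendstoD(1)[OF lim_pos \<open>y < b\<close>]
    by eventually_elim auto
  then obtain i where "f (- real i) < y" "y < f (real i)"
    by (auto simp: eventually_sequentially)
  then obtain x where "f x = y"
    using IVT'[of f "- real i" y "real i"] cont by (auto intro: continuous_at_imp_continuous_on)
  with strict_mono_eq[OF mono] show ?thesis
    by auto
qed

context
  fixes \<nu> :: real
  assumes \<nu>_pos: "0 < \<nu>"
begin

interpretation chisq: prob_space "chisq \<nu>"
  using \<nu>_pos by (rule prob_space_chisq)

lemma integrable_chisq_Phi:
  "f \<in> borel_measurable borel \<Longrightarrow> integrable (chisq \<nu>) (\<lambda>v. Phi (f v))"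
  by (intro chisq.integrable_const_bound[where B = 1]) (auto simp: abs_Phi_le_1)

lemma nct_cdf_tendsto:
  assumes "\<And>v. 0 < v \<Longrightarrow> (\<lambda>i. Phi (x i * sqrt (v / \<nu>) - \<delta> i)) \<longlonglongrightarrow> h v"
    and [measurable]: "h \<in> borel_measurable borel"
  shows "(\<lambda>i. nct_cdf \<nu> (\<delta> i) (x i)) \<longlonglongrightarrow> (\<integral>v. h v \<partial>chisq \<nu>)"
  unfolding nct_cdf_eq_chisq_integral[OF \<nu>_pos]
proof (rule integral_dominated_convergence[where w = "\<lambda>_. 1"])
  show "AE v in chisq \<nu>. (\<lambda>i. Phi (x i * sqrt (v / \<nu>) - \<delta> i)) \<longlonglongrightarrow> h v"
    using AE_chisq_pos by eventually_elim (rule assms(1))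
  show "AE v in chisq \<nu>. norm (Phi (x i * sqrt (v / \<nu>) - \<delta> i)) \<le> 1" for i
    by (simp add: abs_Phi_le_1)
qed auto

lemma nct_cdf_tendsto_const:
  assumes "\<And>v. 0 < v \<Longrightarrow> (\<lambda>i. Phi (x i * sqrt (v / \<nu>) - \<delta> i)) \<longlonglongrightarrow> L"
  shows "(\<lambda>i. nct_cdf \<nu> (\<delta> i) (x i)) \<longlonglongrightarrow> L"
  using nct_cdf_tendsto[of x \<delta> "\<lambda>_. L"] assms by (simp add: chisq.prob_space)

lemma isCont_nct_cdf_delta: "isCont (\<lambda>\<delta>. nct_cdf \<nu> \<delta> x) \<delta>\<^sub>0"
proof (rule continuous_at_sequentiallyI)
  fix \<delta> :: "nat \<Rightarrow> real" assume "\<delta> \<longlonglongrightarrow> \<delta>\<^sub>0"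
  then have "(\<lambda>i. nct_cdf \<nu> (\<delta> i) x) \<longlonglongrightarrow> (\<integral>v. Phi (x * sqrt (v / \<nu>) - \<delta>\<^sub>0) \<partial>chisq \<nu>)"
    by (intro nct_cdf_tendsto isCont_tendsto_compose[OF isCont_Phi] tendsto_intros) auto
  then show "(\<lambda>i. nct_cdf \<nu> (\<delta> i) x) \<longlonglongrightarrow> nct_cdf \<nu> \<delta>\<^sub>0 x"
    by (simp add: nct_cdf_eq_chisq_integral[OF \<nu>_pos])
qed

lemma isCont_nct_cdf: "isCont (nct_cdf \<nu> \<delta>) x\<^sub>0"
proof (rule continuous_at_sequentiallyI)
  fix x :: "nat \<Rightarrow> real" assume "x \<longlonglongrightarrow> x\<^sub>0"
  then have "(\<lambda>i. nct_cdf \<nu> \<delta> (x i)) \<longlonglongrightarrow> (\<integral>v. Phi (x\<^sub>0 * sqrt (v / \<nu>) - \<delta>) \<partial>chisq \<nu>)"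
    by (intro nct_cdf_tendsto isCont_tendsto_compose[OF isCont_Phi] tendsto_intros) auto
  then show "(\<lambda>i. nct_cdf \<nu> \<delta> (x i)) \<longlonglongrightarrow> nct_cdf \<nu> \<delta> x\<^sub>0"
    by (simp add: nct_cdf_eq_chisq_integral[OF \<nu>_pos])
qed

lemma nct_cdf_delta_pos_lim: "(\<lambda>i. nct_cdf \<nu> (real i) x) \<longlonglongrightarrow> 0"
  by (rule nct_cdf_tendsto_const, rule filterlim_compose[OF Phi_at_bot]) real_asymp

lemma nct_cdf_delta_neg_lim: "(\<lambda>i. nct_cdf \<nu> (- real i) x) \<longlonglongrightarrow> 1"
  by (rule nct_cdf_tendsto_const, rule filterlim_compose[OF Phi_at_top]) real_asymp

lemma nct_cdf_pos_lim: "(\<lambda>i. nct_cdf \<nu> \<delta> (real i)) \<longlonglongrightarrow> 1"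
proof (rule nct_cdf_tendsto_const, rule filterlim_compose[OF Phi_at_top])
  fix v :: real assume "0 < v"
  then have "0 < sqrt (v / \<nu>)"
    using \<nu>_pos by simp
  then show "filterlim (\<lambda>i. real i * sqrt (v / \<nu>) - \<delta>) at_top sequentially"
    by real_asymp
qed

lemma nct_cdf_neg_lim: "(\<lambda>i. nct_cdf \<nu> \<delta> (- real i)) \<longlonglongrightarrow> 0"
proof (rule nct_cdf_tendsto_const, rule filterlim_compose[OF Phi_at_bot])
  fix v :: real assume "0 < v"
  then have "0 < sqrt (v / \<nu>)"
    using \<nu>_pos by simp
  then show "filterlim (\<lambda>i. - real i * sqrt (v / \<nu>) - \<delta>) at_bot sequentially"
    by real_asymp
qed

lemma nct_cdf_strict_antimono_delta: "\<delta>\<^sub>1 < \<delta>\<^sub>2 \<Longrightarrow> nct_cdf \<nu> \<delta>\<^sub>2 x < nct_cdf \<nu> \<delta>\<^sub>1 x"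
  unfolding nct_cdf_eq_chisq_integral[OF \<nu>_pos]
  by (intro chisq.integral_less_AE_space integrable_chisq_Phi AE_I2 strict_monoD[OF Phi_strict_mono])
     (auto simp: chisq.emeasure_space_1)

lemma strict_mono_nct_cdf: "strict_mono (nct_cdf \<nu> \<delta>)"
proof (rule strict_monoI)
  fix x\<^sub>1 x\<^sub>2 :: real assume "x\<^sub>1 < x\<^sub>2"
  have "AE v in chisq \<nu>. Phi (x\<^sub>1 * sqrt (v / \<nu>) - \<delta>) < Phi (x\<^sub>2 * sqrt (v / \<nu>) - \<delta>)"
    using AE_chisq_pos
  proof eventually_elim
    case (elim v)
    then show ?case
      using \<nu>_pos \<open>x\<^sub>1 < x\<^sub>2\<close> by (intro strict_monoD[OF Phi_strict_mono]) simp
  qed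
  then show "nct_cdf \<nu> \<delta> x\<^sub>1 < nct_cdf \<nu> \<delta> x\<^sub>2"
    unfolding nct_cdf_eq_chisq_integral[OF \<nu>_pos]
    by (intro chisq.integral_less_AE_space integrable_chisq_Phi) (auto simp: chisq.emeasure_space_1)
qed

lemma nct_cdf_central_minus: "nct_cdf \<nu> 0 (- x) = 1 - nct_cdf \<nu> 0 x"
proof -
  have "nct_cdf \<nu> 0 (- x) = (\<integral>v. 1 - Phi (x * sqrt (v / \<nu>)) \<partial>chisq \<nu>)"
    unfolding nct_cdf_eq_chisq_integral[OF \<nu>_pos] by (simp add: Phi_minus[symmetric])
  also have "\<dots> = 1 - nct_cdf \<nu> 0 x"
    unfolding nct_cdf_eq_chisq_integral[OF \<nu>_pos]
    by (subst Bochner_Integration.integral_diff) (auto intro: integrable_chisq_Phi simp: chisq.prob_space)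
  finally show ?thesis .
qed

lemma ex1_nct_cdf_delta:
  assumes "0 < y" "y < 1"
  shows "\<exists>!\<delta>. nct_cdf \<nu> \<delta> x = y"
proof -
  have "\<exists>!\<delta>. nct_cdf \<nu> (- \<delta>) x = y"
  proof (rule strict_mono_ex1_eq)
    show "strict_mono (\<lambda>\<delta>. nct_cdf \<nu> (- \<delta>) x)"
      by (intro strict_monoI nct_cdf_strict_antimono_delta) simp
    show "isCont (\<lambda>\<delta>. nct_cdf \<nu> (- \<delta>) x) \<delta>" for \<delta>
      by (intro isCont_o2[OF _ isCont_nct_cdf_delta] continuous_intros)
  qed (use nct_cdf_delta_pos_lim nct_cdf_delta_neg_lim assms in simp_all)
  then obtain \<delta> where \<delta>: "nct_cdf \<nu> (- \<delta>) x = y" and unique: "\<And>\<delta>'. nct_cdf \<nu> (- \<delta>') x = y \<Longrightarrow> \<delta>' = \<delta>"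
    by blast
  show ?thesis
  proof
    show "nct_cdf \<nu> (- \<delta>) x = y"
      by (fact \<delta>)
    show "\<delta>' = - \<delta>" if "nct_cdf \<nu> \<delta>' x = y" for \<delta>'
      using unique[of "- \<delta>'"] that by simp
  qed
qed

lemma nct_cdf_t_quantile:
  assumes "0 < p" "p < 1"
  shows "nct_cdf \<nu> 0 (t_quantile \<nu> p) = p"
  unfolding t_quantile_def
  by (rule theI', rule strict_mono_ex1_eq[OF strict_mono_nct_cdf isCont_nct_cdf nct_cdf_neg_lim nct_cdf_pos_lim])
     (use assms in auto)

lemma nct_cdf_eq_central_iff:
  assumes eq: "nct_cdf \<nu> \<delta> q = nct_cdf \<nu> 0 s"
  shows "(\<delta> < 0 \<longleftrightarrow> q < s) \<and> (\<delta> = 0 \<longleftrightarrow> q = s)"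
proof -
  note central_less = strict_mono_less[OF strict_mono_nct_cdf]
  consider "\<delta> < 0" | "\<delta> = 0" | "0 < \<delta>"
    by linarith
  then show ?thesis
  proof cases
    case 1
    then have "nct_cdf \<nu> 0 q < nct_cdf \<nu> 0 s"
      using nct_cdf_strict_antimono_delta[of \<delta> 0 q] eq by linarith
    with 1 show ?thesis
      using central_less by auto
  next
    case 2
    with eq show ?thesis
      using strict_mono_eq[OF strict_mono_nct_cdf] by auto
  next
    case 3
    then have "nct_cdf \<nu> 0 s < nct_cdf \<nu> 0 q"
      using nct_cdf_strict_antimono_delta[of 0 \<delta> q] eq by linarith
    with 3 show ?thesis
      using central_less by auto
  qed
qed

end

lemma nct_cdf_delta_L:
  assumes "d < n" "0 < \<alpha>" "\<alpha> < 1"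
  shows "nct_cdf (real n - real d) (delta_L n d \<alpha> \<theta> \<sigma> c) (qstat n \<theta> \<sigma> c) = 1 - \<alpha>/2"
  unfolding delta_L_def by (rule theI', rule ex1_nct_cdf_delta) (use assms in auto)

lemma nct_cdf_delta_U:
  assumes "d < n" "0 < \<alpha>" "\<alpha> < 1"
  shows "nct_cdf (real n - real d) (delta_U n d \<alpha> \<theta> \<sigma> c) (qstat n \<theta> \<sigma> c) = \<alpha>/2"
  unfolding delta_U_def by (rule theI', rule ex1_nct_cdf_delta) (use assms in auto)

lemma
  assumes "0 < n" "0 < \<sigma>"
  shows qstat_less_iff: "qstat n \<theta> \<sigma> c < s \<longleftrightarrow> c < \<theta> + s * \<sigma> / sqrt (real n)"
    and qstat_eq_iff: "qstat n \<theta> \<sigma> c = s \<longleftrightarrow> c = \<theta> + s * \<sigma> / sqrt (real n)"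
proof -
  define k where "k = \<sigma> / sqrt (real n)"
  have "0 < k"
    using assms by (simp add: k_def)
  have q: "qstat n \<theta> \<sigma> c = (c - \<theta>) / k" and sk: "s * \<sigma> / sqrt (real n) = s * k"
    by (simp_all add: qstat_def k_def)
  show "qstat n \<theta> \<sigma> c < s \<longleftrightarrow> c < \<theta> + s * \<sigma> / sqrt (real n)"
    "qstat n \<theta> \<sigma> c = s \<longleftrightarrow> c = \<theta> + s * \<sigma> / sqrt (real n)"
    unfolding q sk using \<open>0 < k\<close> by (auto simp: pos_divide_less_eq divide_eq_eq)
qed

lemma tendsto_one_minus_Phi_scaled:
  assumes "0 < r"
  shows "((\<lambda>m::nat. 1 - Phi (sqrt (real m / r) * \<delta>))
           \<longlongrightarrow> (if \<delta> < 0 then 1 else if \<delta> = 0 then 1/2 else 0)) sequentially"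
proof -
  have at_top: "filterlim (\<lambda>m::nat. sqrt (real m / r) * e) at_top sequentially" if "0 < e" for e
    using that assms by real_asymp
  consider "\<delta> < 0" | "\<delta> = 0" | "0 < \<delta>"
    by linarith
  then show ?thesis
  proof cases
    case 1
    with at_top[of "- \<delta>"] have "filterlim (\<lambda>m::nat. sqrt (real m / r) * \<delta>) at_bot sequentially"
      by (simp add: filterlim_uminus_at_bot)
    from filterlim_compose[OF Phi_at_bot this] 1 show ?thesis
      by (auto intro: tendsto_eq_intros)
  next
    case 2
    then show ?thesis
      by (simp add: Phi_0)
  next
    case 3
    from filterlim_compose[OF Phi_at_top at_top[OF this]] 3 show ?thesis
      by (auto intro: tendsto_eq_intros)
  qed
qed

theorem corollary2:
  fixes n d :: nat and \<alpha> \<theta> \<sigma> c :: real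
  assumes "0 < d" and "d < n" and "0 < \<alpha>" and "\<alpha> < 1" and "0 < \<sigma>"
  defines "\<theta>L \<equiv> \<theta> - t_quantile (real n - real d) (1 - \<alpha>/2) * \<sigma> / sqrt (real n)"
      and "\<theta>U \<equiv> \<theta> + t_quantile (real n - real d) (1 - \<alpha>/2) * \<sigma> / sqrt (real n)"
  shows "((\<lambda>m::nat. 1 - Phi (sqrt (real m / real n) * delta_U n d \<alpha> \<theta> \<sigma> c))
            \<longlongrightarrow> (if c < \<theta>L then 1 else if c = \<theta>L then 1/2 else 0)) sequentially \<and>
         ((\<lambda>m::nat. 1 - Phi (sqrt (real m / real n) * delta_L n d \<alpha> \<theta> \<sigma> c))
            \<longlongrightarrow> (if c < \<theta>U then 1 else if c = \<theta>U then 1/2 else 0)) sequentially"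
proof -
  define \<nu> where "\<nu> = real n - real d"
  define t where "t = t_quantile \<nu> (1 - \<alpha>/2)"
  have \<nu>: "0 < \<nu>" and n: "0 < n"
    using \<open>d < n\<close> by (simp_all add: \<nu>_def)
  have t: "nct_cdf \<nu> 0 t = 1 - \<alpha>/2" "nct_cdf \<nu> 0 (- t) = \<alpha>/2"
    using nct_cdf_t_quantile[OF \<nu>, of "1 - \<alpha>/2"] nct_cdf_central_minus[OF \<nu>, of t] assms
    by (simp_all add: t_def)
  have sign_U: "delta_U n d \<alpha> \<theta> \<sigma> c < 0 \<longleftrightarrow> c < \<theta>L" "delta_U n d \<alpha> \<theta> \<sigma> c = 0 \<longleftrightarrow> c = \<theta>L"
    using nct_cdf_eq_central_iff[OF \<nu>, of "delta_U n d \<alpha> \<theta> \<sigma> c" "qstat n \<theta> \<sigma> c" "- t"]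
      nct_cdf_delta_U[of d n \<alpha> \<theta> \<sigma> c] t assms qstat_less_iff[OF n] qstat_eq_iff[OF n]
    by (simp_all add: \<theta>L_def t_def \<nu>_def)
  have sign_L: "delta_L n d \<alpha> \<theta> \<sigma> c < 0 \<longleftrightarrow> c < \<theta>U" "delta_L n d \<alpha> \<theta> \<sigma> c = 0 \<longleftrightarrow> c = \<theta>U"
    using nct_cdf_eq_central_iff[OF \<nu>, of "delta_L n d \<alpha> \<theta> \<sigma> c" "qstat n \<theta> \<sigma> c" t]
      nct_cdf_delta_L[of d n \<alpha> \<theta> \<sigma> c] t assms qstat_less_iff[OF n] qstat_eq_iff[OF n]
    by (simp_all add: \<theta>U_def t_def \<nu>_def)
  from n show ?thesis
    using tendsto_one_minus_Phi_scaled[of "real n" "delta_U n d \<alpha> \<theta> \<sigma> c"]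
      tendsto_one_minus_Phi_scaled[of "real n" "delta_L n d \<alpha> \<theta> \<sigma> c"]
    unfolding sign_U sign_L by simp
qed

end
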